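(* Let $\alpha<_c\beta$ with $\beta/\!\!/\alpha$ an nc border strip with $n$ boxes, let $j\in NE(\beta/\!\!/\alpha)$, and let $w\in CRHW_n$ with $w(\alpha)=\beta$. Define $w'$ to be the unique reverse hookword with the same content as $w$ and with $\mathrm{leg}(w')=\mathrm{leg}(w)\setminus\{j\}$ if $j\in\mathrm{leg}(w)$, and $\mathrm{leg}(w')=\mathrm{leg}(w)\cup\{j\}$ if $j\notin\mathrm{leg}(w)$. Then $w'\in CRHW_n$ and $w'(\alpha)=\beta$.
   Context: A composition is a finite sequence $\alpha=(\alpha_1,\dots,\alpha_k)$ of positive integers; $\ell(\alpha)=k$; its diagram is the set of boxes $(i,j)$, $1\le i\le\ell(\alpha)$, $1\le j\le\alpha_i$, rows top to bottom, columns left to right. For compositions $\gamma=(\gamma_1,\dots,\gamma_l)$, $\delta$ write $\gamma\lessdot_c\delta$ if $\delta=(1,\gamma_1,\dots,\gamma_l)$ or $\delta=(\gamma_1,\dots,\gamma_k+1,\dots,\gamma_l)$ with $\gamma_i\ne\gamma_k$ for all $i<k$; $<_c$ is the transitive closure. For $\gamma<_c\delta$, $\delta/\!\!/\gamma$ consists of the boxes of $\delta$ other than $(\ell(\delta)-\ell(\gamma)+i,j)$, $1\le i\le\ell(\gamma)$, $1\le j\le\gamma_i$. $\mathrm{supp}(\beta/\!\!/\alpha)$ is the set of columns containing a box of $\beta/\!\!/\alpha$; interval shape: supp is a set of consecutive integers. nc border strip: an interval shape such that (1) if $(i,1),(i,2)\in\beta/\!\!/\alpha$ then $(i,1)$ is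 the bottommost box of column 1 of $\beta/\!\!/\alpha$, and (2) if $(i,j),(i,j+1)\in\beta/\!\!/\alpha$ with $j\ge2$ then $(i,j)$ is the topmost box of column $j$ of $\beta/\!\!/\alpha$. $NE(\beta/\!\!/\alpha)$ is the set of $j\in\mathrm{supp}(\beta/\!\!/\alpha)$ such that column $j+1$ of $\beta/\!\!/\alpha$ contains at least one box and $i_1<i_2$ for all boxes $(i_1,j+1),(i_2,j)\in\beta/\!\!/\alpha$. Box-adding operators: $\mathfrak t_1(\alpha)=(1,\alpha_1,\dots,\alpha_k)$; for $i\ge2$, $\mathfrak t_i(\alpha)$ increases the leftmost part equal to $i-1$ by $1$, and is $0$ if none; $\mathfrak t_i(0)=0$. A word $w=\mathfrak t_{i_1}\cdots\mathfrak t_{i_n}$ acts by $w(\alpha)=\mathfrak t_{i_1}(\cdots\mathfrak t_{i_n}(\alpha))$; it is a reverse $k$-hookword if $i_1\le\cdots\le i_{k+1}>i_{k+2}>\cdots>i_n$, with $\mathrm{leg}(w)=\{i_{k+1},\dots,i_n\}$ (a set of distinct integers containing the maximum index). Its content is the vector whose $i$-th entry is the number of occurrences of $\mathfrak t_i$ in $w$; a reverse hookword is determined by its content together with its leg. $w$ is connected if $\{i_1,\dots,i_n\}$ is a set of consecutive integers; $CRHW_n$ is the set of connected reverse hookwords of length $n$. *)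

theory Defs
  imports Main
begin

text \<open>Compositions are lists of positive naturals; rows and columns are 1-indexed.\<close>

definition is_composition :: "nat list \<Rightarrow> bool" where
  "is_composition \<alpha> \<longleftrightarrow> (\<forall>x\<in>set \<alpha>. 0 < x)"

definition c_cover :: "nat list \<Rightarrow> nat list \<Rightarrow> bool" where
  "c_cover \<gamma> \<delta> \<longleftrightarrow> \<delta> = 1 # \<gamma> \<or>
     (\<exists>k < length \<gamma>. (\<forall>i<k. \<gamma> ! i \<noteq> \<gamma> ! k) \<and> \<delta> = \<gamma>[k := Suc (\<gamma> ! k)])"

definition c_less :: "nat list \<Rightarrow> nat list \<Rightarrow> bool" where
  "c_less = tranclp c_cover"

definition boxes :: "nat list \<Rightarrow> (nat \<times> nat) set" where
  "boxes \<alpha> = {(i, j). 1 \<le> i \<and> i \<le> length \<alpha> \<and> 1 \<le> j \<and> j \<le> \<alpha> ! (i - 1)}"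

definition skew :: "nat list \<Rightarrow> nat list \<Rightarrow> (nat \<times> nat) set" where
  "skew \<delta> \<gamma> = boxes \<delta> -
     {(length \<delta> - length \<gamma> + i, j) | i j. 1 \<le> i \<and> i \<le> length \<gamma> \<and> 1 \<le> j \<and> j \<le> \<gamma> ! (i - 1)}"

definition supp :: "(nat \<times> nat) set \<Rightarrow> nat set" where
  "supp S = {j. \<exists>i. (i, j) \<in> S}"

definition interval_shape :: "(nat \<times> nat) set \<Rightarrow> bool" where
  "interval_shape S \<longleftrightarrow> (\<forall>a b c. a \<in> supp S \<longrightarrow> b \<in> supp S \<longrightarrow> a \<le> c \<longrightarrow> c \<le> b \<longrightarrow> c \<in> supp S)"

definition nc_border_strip :: "(nat \<times> nat) set \<Rightarrow> bool" where
  "nc_border_strip S \<longleftrightarrow> interval_shape S \<and>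
     (\<forall>i. (i, 1) \<in> S \<and> (i, 2) \<in> S \<longrightarrow> (\<forall>i'. (i', 1) \<in> S \<longrightarrow> i' \<le> i)) \<and>
     (\<forall>i j. 2 \<le> j \<and> (i, j) \<in> S \<and> (i, Suc j) \<in> S \<longrightarrow> (\<forall>i'. (i', j) \<in> S \<longrightarrow> i \<le> i'))"

definition NE :: "(nat \<times> nat) set \<Rightarrow> nat set" where
  "NE S = {j \<in> supp S. (\<exists>i. (i, Suc j) \<in> S) \<and>
             (\<forall>i1 i2. (i1, Suc j) \<in> S \<longrightarrow> (i2, j) \<in> S \<longrightarrow> i1 < i2)}"

text \<open>Box-adding operators; \<open>None\<close> plays the role of 0.\<close>
fun inc_first :: "nat \<Rightarrow> nat list \<Rightarrow> nat list option" where
  "inc_first v [] = None"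
| "inc_first v (x # xs) = (if x = v then Some (Suc x # xs) else map_option (Cons x) (inc_first v xs))"

definition t_op :: "nat \<Rightarrow> nat list \<Rightarrow> nat list option" where
  "t_op i \<alpha> = (if i = 0 then None else if i = 1 then Some (1 # \<alpha>) else inc_first (i - 1) \<alpha>)"

text \<open>A word \<open>[i\<^sub>1,...,i\<^sub>n]\<close> acts by \<open>t\<^sub>i\<^sub>1(...(t\<^sub>i\<^sub>n(\<alpha>)))\<close>.\<close>
definition apply_word :: "nat list \<Rightarrow> nat list \<Rightarrow> nat list option" where
  "apply_word w \<alpha> = foldr (\<lambda>i acc. Option.bind acc (t_op i)) w (Some \<alpha>)"

text \<open>Reverse k-hookwords (k counted as in the paper: positions 1..k+1 weakly increase,
  positions k+1..n strictly decrease).\<close>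
definition rhw_k :: "nat list \<Rightarrow> nat \<Rightarrow> bool" where
  "rhw_k w k \<longleftrightarrow> k < length w \<and> sorted (take (Suc k) w) \<and> sorted_wrt (>) (drop k w)"

definition reverse_hookword :: "nat list \<Rightarrow> bool" where
  "reverse_hookword w \<longleftrightarrow> (\<forall>x\<in>set w. 0 < x) \<and> (\<exists>k. rhw_k w k)"

definition leg :: "nat list \<Rightarrow> nat set" where
  "leg w = set (drop (THE k. rhw_k w k) w)"

definition content :: "nat list \<Rightarrow> nat \<Rightarrow> nat" where
  "content w = (\<lambda>i. count_list w i)"

definition connected_word :: "nat list \<Rightarrow> bool" where
  "connected_word w \<longleftrightarrow> (\<forall>a b c. a \<in> set w \<longrightarrow> b \<in> set w \<longrightarrow> a \<le> c \<longrightarrow> c \<le> b \<longrightarrow> c \<in> set w)"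

definition CRHW :: "nat \<Rightarrow> nat list set" where
  "CRHW n = {w. length w = n \<and> reverse_hookword w \<and> connected_word w}"

end

theory Submission
  imports Defs "HOL-Library.Multiset"
begin

text \<open>Write a reverse hookword as \<open>A D\<close> with \<open>A\<close> weakly increasing and \<open>D\<close> strictly
  decreasing. Toggling \<open>j\<close> in the leg moves a single letter \<open>j\<close> across a block \<open>Q\<close> of
  letters larger than \<open>j\<close> (those of \<open>A\<close> above \<open>j\<close> followed by those of \<open>D\<close> above \<open>j\<close>);
  this keeps the content, connectedness and hook shape, and a reverse hookword is determined by
  its content and leg.

  On compositions, \<open>t\<^sub>j\<close> turns the first part \<open>j - 1\<close>, in row \<open>r\<close> say, into \<open>j\<close>, and a
  letter \<open>x > j\<close> acts on the result as on the original composition unless \<open>x = j + 1\<close> and the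
  new part in row \<open>r\<close> is the first \<open>j\<close>, i.e. unless \<open>t\<^sub>j\<^sub>+\<^sub>1\<close> adds a box of column
  \<open>j + 1\<close> weakly below the box of column \<open>j\<close> added by \<open>t\<^sub>j\<close>. Since \<open>j \<in> NE(\<beta>//\<alpha>)\<close>, every
  box of column \<open>j + 1\<close> of the skew shape lies strictly above every box of column \<open>j\<close>, so
  \<open>t\<^sub>j\<close> commutes past \<open>Q\<close> and the new word still maps \<open>\<alpha>\<close> to \<open>\<beta>\<close>. Besides the NE
  condition only the positivity of the parts of \<open>\<alpha>\<close> is used, to get \<open>j \<ge> 2\<close>.\<close>

section \<open>Box-adding operators as list updates\<close>

definition first_index :: "'a \<Rightarrow> 'a list \<Rightarrow> nat" where
  "first_index v xs = length (takeWhile (\<lambda>y. y \<noteq> v) xs)"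

lemma first_index_less_length: "v \<in> set xs \<Longrightarrow> first_index v xs < length xs"
  unfolding first_index_def by (induction xs) auto

lemma nth_first_index: "v \<in> set xs \<Longrightarrow> xs ! first_index v xs = v"
  using nth_length_takeWhile[of "\<lambda>y. y \<noteq> v" xs] first_index_less_length[of v xs]
  unfolding first_index_def by simp

lemma nth_before_first_index:
  assumes "k < first_index v xs"
  shows "xs ! k \<noteq> v"
proof -
  let ?P = "\<lambda>y. y \<noteq> v"
  have "takeWhile ?P xs ! k \<in> set (takeWhile ?P xs)"
    using assms by (simp add: first_index_def)
  then show ?thesis using assms takeWhile_nth[of k ?P xs]
    by (auto simp: first_index_def dest: set_takeWhileD)
qed

lemma first_index_eqI:
  assumes "i < length xs" "xs ! i = v" "\<And>k. k < i \<Longrightarrow> xs ! k \<noteq> v"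
  shows "first_index v xs = i"
proof -
  have "v \<in> set xs" using assms(1,2) nth_mem by blast
  then have "first_index v xs < length xs" "xs ! first_index v xs = v"
    by (simp_all add: first_index_less_length nth_first_index)
  then show ?thesis
    using assms nth_before_first_index[of i v xs] nat_neq_iff by blast
qed

lemma first_index_map_eq:
  assumes "map (\<lambda>y. y = v) xs = map (\<lambda>y. y = v) ys"
  shows "first_index v xs = first_index v ys"
proof -
  have "first_index v zs = length (takeWhile Not (map (\<lambda>y. y = v) zs))" for zs :: "'a list"
    by (simp add: first_index_def takeWhile_map comp_def)
  then show ?thesis using assms by simp
qed

lemma mem_set_map_eq:
  assumes "map (\<lambda>y. y = v) xs = map (\<lambda>y. y = v) ys"
  shows "v \<in> set xs \<longleftrightarrow> v \<in> set ys"
proof -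
  have "v \<in> set zs \<longleftrightarrow> True \<in> set (map (\<lambda>y. y = v) zs)" for zs :: "'a list"
    by auto
  then show ?thesis by (simp only: assms)
qed

lemma inc_first_eq_list_update:
  "inc_first v xs = (if v \<in> set xs then Some (xs[first_index v xs := Suc v]) else None)"
  by (induction xs) (auto simp: first_index_def)

lemma t_op_eq:
  "2 \<le> x \<Longrightarrow> t_op x d = (if x - 1 \<in> set d then Some (d[first_index (x - 1) d := x]) else None)"
  by (simp add: t_op_def inc_first_eq_list_update)

lemma t_op_eq_list_update:
  assumes "t_op x d = Some e" "2 \<le> x"
  shows "x - 1 \<in> set d" "e = d[first_index (x - 1) d := x]"
  using assms by (auto simp: t_op_eq split: if_splits)

lemma apply_word_Nil [simp]: "apply_word [] a = Some a"
  by (simp add: apply_word_def)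

lemma apply_word_Cons: "apply_word (x # xs) a = Option.bind (apply_word xs a) (t_op x)"
  by (simp add: apply_word_def)

lemma apply_word_single [simp]: "apply_word [x] a = t_op x a"
  by (simp add: apply_word_def)

lemma apply_word_append:
  "apply_word (xs @ ys) a = Option.bind (apply_word ys a) (apply_word xs)"
  by (induction xs) (auto simp: apply_word_Cons bind_assoc apply_word_def)

lemma apply_word_Cons_SomeE:
  assumes "apply_word (x # xs) a = Some e"
  obtains e1 where "apply_word xs a = Some e1" "t_op x e1 = Some e"
  using assms by (cases "apply_word xs a") (auto simp: apply_word_Cons)

lemma apply_word_append3_SomeE:
  assumes "apply_word (P @ X @ R) a = Some b"
  obtains g e where "apply_word R a = Some g" "apply_word X g = Some e" "apply_word P e = Some b"
  using assms
  by (cases "apply_word R a"; cases "apply_word (X @ R) a") (auto simp: apply_word_append)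

lemma t_op_larger_keeps_positions:
  assumes "t_op x d = Some e" "j < x" "2 \<le> j"
  shows "map (\<lambda>y. y = j - 1) e = map (\<lambda>y. y = j - 1) d"
proof -
  let ?P = "\<lambda>y. y = j - 1" and ?f = "first_index (x - 1) d"
  have x: "x - 1 \<in> set d" "e = d[?f := x]"
    using t_op_eq_list_update[OF assms(1)] assms(2,3) by auto
  then have "?f < length d" "?P (d ! ?f) = ?P x"
    using assms(2,3) by (auto simp: first_index_less_length nth_first_index)
  then have "(map ?P d)[?f := ?P x] = map ?P d"
    using list_update_id[of "map ?P d" ?f] by simp
  then show ?thesis
    using x(2) by (simp add: map_update)
qed

lemma apply_word_larger_keeps_positions:
  assumes "\<forall>x\<in>set Q. j < x" "2 \<le> j" "apply_word Q d = Some e"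
  shows "map (\<lambda>y. y = j - 1) e = map (\<lambda>y. y = j - 1) d"
  using assms(1,3)
proof (induction Q arbitrary: e)
  case (Cons x xs)
  then obtain e1 where "apply_word xs d = Some e1" "t_op x e1 = Some e"
    by (auto elim: apply_word_Cons_SomeE)
  with Cons assms(2) show ?case using t_op_larger_keeps_positions by fastforce
qed simp

text \<open>The hypothesis for \<open>x = j + 1\<close> says that the new \<open>j\<close> at position \<open>r\<close> is not the
  first one, so \<open>t\<^sub>x\<close> does not see it.\<close>

lemma t_op_list_update_commute:
  assumes "j < x" "2 \<le> j" "r < length e" "e ! r = j - 1"
    and above: "x = Suc j \<Longrightarrow> \<exists>f<r. e ! f = j"
  shows "t_op x (e[r := j]) = map_option (\<lambda>e'. e'[r := j]) (t_op x e)"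
proof -
  let ?v = "x - 1"
  have update: "(?v \<in> set (e[r := j]) \<longleftrightarrow> ?v \<in> set e) \<and>
                 first_index ?v (e[r := j]) = first_index ?v e"
  proof (cases "x = Suc j")
    case True
    then obtain f where f: "f < r" "e ! f = j" using above by blast
    have j: "j \<in> set e" using f assms(3) nth_mem[of f e] by simp
    have "first_index j e \<le> f"
      using nth_before_first_index[of f j e] f(2) not_le by blast
    with f(1) have "first_index j (e[r := j]) = first_index j e"
      by (intro first_index_eqI) (auto simp: j first_index_less_length nth_first_index
          nth_before_first_index)
    with True \<open>j \<in> set e\<close> assms(3) show ?thesis by (auto simp: set_update_memI)
  next
    case False
    then have "j \<noteq> ?v" "j - 1 \<noteq> ?v" using assms(1,2) by arith+
    then have positions: "map (\<lambda>y. y = ?v) (e[r := j]) = map (\<lambda>y. y = ?v) e"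
      using assms(3,4) list_update_id[of "map (\<lambda>y. y = ?v) e" r] by (simp add: map_update)
    show ?thesis using first_index_map_eq[OF positions] mem_set_map_eq[OF positions] by simp
  qed
  have "first_index ?v e \<noteq> r" if "?v \<in> set e"
  proof
    assume "first_index ?v e = r"
    then have "j - 1 = ?v" using nth_first_index[OF that] assms(4) by simp
    then show False using assms(1,2) by arith
  qed
  then show ?thesis
    using update assms(1,2) by (simp add: t_op_eq list_update_swap)
qed

section \<open>Boxes added by a word\<close>

text \<open>Rows of a diagram counted from the bottom, so that \<open>t\<^sub>1\<close>, which adds a new top row,
  does not renumber existing boxes.\<close>

definition bottom_boxes :: "nat list \<Rightarrow> (nat \<times> nat) set" where
  "bottom_boxes d = {(p, c). 1 \<le> p \<and> p \<le> length d \<and> 1 \<le> c \<and> c \<le> d ! (length d - p)}"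

definition new_box :: "nat \<Rightarrow> nat list \<Rightarrow> nat \<times> nat" where
  "new_box i d = (if i = 1 then length d + 1 else length d - first_index (i - 1) d, i)"

fun added_boxes :: "nat list \<Rightarrow> nat list \<Rightarrow> (nat \<times> nat) set" where
  "added_boxes [] d = {}"
| "added_boxes (x # xs) d =
     added_boxes xs d \<union> (case apply_word xs d of None \<Rightarrow> {} | Some e \<Rightarrow> {new_box x e})"

lemma bottom_boxes_t_op:
  assumes "t_op i d = Some d'"
  shows "bottom_boxes d' = insert (new_box i d) (bottom_boxes d)" "new_box i d \<notin> bottom_boxes d"
proof (atomize (full), cases "i = 1")
  case True
  then have d': "d' = 1 # d" using assms by (simp add: t_op_def)
  have "(1 # d) ! (Suc (length d) - p) = d ! (length d - p)" if "1 \<le> p" "p \<le> length d" for p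
    using that by (simp add: Suc_diff_le)
  then show "bottom_boxes d' = insert (new_box i d) (bottom_boxes d) \<and> new_box i d \<notin> bottom_boxes d"
    using True by (auto simp: bottom_boxes_def new_box_def d' le_Suc_eq)
next
  case False
  then have i: "2 \<le> i" using assms by (cases i) (auto simp: t_op_def)
  let ?f = "first_index (i - 1) d"
  have f: "?f < length d" "d ! ?f = i - 1" and d': "d' = d[?f := i]"
    using t_op_eq_list_update[OF assms i] by (auto simp: first_index_less_length nth_first_index)
  have "(p, c) \<in> bottom_boxes d' \<longleftrightarrow> (p, c) = (length d - ?f, i) \<or> (p, c) \<in> bottom_boxes d"
    for p c
  proof (cases "p = length d - ?f")
    case True
    then have "length d - p = ?f" using f(1) by arith
    then show ?thesis using True f i by (auto simp: bottom_boxes_def d')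
  next
    case False
    then have "1 \<le> p \<Longrightarrow> p \<le> length d \<Longrightarrow> length d - p \<noteq> ?f" using f(1) by arith
    then show ?thesis using False by (auto simp: bottom_boxes_def d')
  qed
  then show "bottom_boxes d' = insert (new_box i d) (bottom_boxes d) \<and> new_box i d \<notin> bottom_boxes d"
    using False f i by (auto simp: bottom_boxes_def new_box_def)
qed

lemma length_apply_word_mono: "apply_word w d = Some e \<Longrightarrow> length d \<le> length e"
proof (induction w arbitrary: e)
  case (Cons x xs)
  then obtain e1 where "apply_word xs d = Some e1" "t_op x e1 = Some e"
    by (auto elim: apply_word_Cons_SomeE)
  with Cons.IH show ?case by (fastforce simp: t_op_def inc_first_eq_list_update split: if_splits)
qed simp

lemma added_boxes_eq:
  "apply_word w d = Some e \<Longrightarrow>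
     added_boxes w d = bottom_boxes e - bottom_boxes d \<and> bottom_boxes d \<subseteq> bottom_boxes e"
proof (induction w arbitrary: e)
  case (Cons x xs)
  then obtain e1 where "apply_word xs d = Some e1" "t_op x e1 = Some e"
    by (auto elim: apply_word_Cons_SomeE)
  with Cons.IH bottom_boxes_t_op[of x e1 e] show ?case by auto
qed simp

lemma added_boxes_append:
  "apply_word ys d = Some e \<Longrightarrow> added_boxes (xs @ ys) d = added_boxes ys d \<union> added_boxes xs e"
  by (induction xs) (auto simp: apply_word_append)

lemma added_boxes_column: "(p, c) \<in> added_boxes w d \<Longrightarrow> c \<in> set w"
  by (induction w) (auto simp: new_box_def split: option.splits if_splits)

section \<open>Moving a letter past larger letters\<close>

lemma apply_word_larger_nth:
  assumes "\<forall>x\<in>set Q. j < x" "2 \<le> j" "apply_word Q d = Some e" "r < length d" "d ! r = j - 1"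
  shows "length e = length d" "e ! r = j - 1"
proof -
  have pos: "map (\<lambda>y. y = j - 1) e = map (\<lambda>y. y = j - 1) d"
    using apply_word_larger_keeps_positions[OF assms(1-3)] .
  then show len: "length e = length d" by (rule map_eq_imp_length_eq)
  show "e ! r = j - 1"
    using arg_cong[OF pos, of "\<lambda>xs. xs ! r"] assms(4,5) len by simp
qed

lemma t_op_Suc_new_box_row:
  assumes "t_op (Suc j) e = Some e'" "1 \<le> j"
    and "new_box (Suc j) e \<in> S" "\<forall>p. (p, Suc j) \<in> S \<longrightarrow> length e - r < p"
  shows "\<exists>f<r. e ! f = j"
proof -
  have j: "j \<in> set e" using t_op_eq_list_update(1)[OF assms(1)] assms(2) by simp
  have "new_box (Suc j) e = (length e - first_index j e, Suc j)"
    using assms(2) by (simp add: new_box_def)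
  then have "(length e - first_index j e, Suc j) \<in> S" using assms(3) by simp
  then have "length e - r < length e - first_index j e" using assms(4) by blast
  then have "first_index j e < r" by linarith
  with nth_first_index[OF j] show ?thesis by blast
qed

lemma apply_word_list_update:
  assumes "\<forall>x\<in>set Q. j < x" "2 \<le> j" "r < length d" "d ! r = j - 1"
    and "apply_word Q d = Some e"
    and "\<forall>p. (p, Suc j) \<in> added_boxes Q d \<longrightarrow> length d - r < p"
  shows "apply_word Q (d[r := j]) = Some (e[r := j])"
  using assms(1,5,6)
proof (induction Q arbitrary: e)
  case (Cons x xs)
  then obtain e1 where e1: "apply_word xs d = Some e1" "t_op x e1 = Some e"
    by (auto elim: apply_word_Cons_SomeE)
  have x: "j < x" using Cons.prems(1) by simp
  have len: "length e1 = length d" and e1r: "e1 ! r = j - 1"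
    using apply_word_larger_nth[OF _ assms(2) e1(1) assms(3,4)] Cons.prems(1) by simp_all
  have "new_box x e1 \<in> added_boxes (x # xs) d" using e1(1) by simp
  then have "\<exists>f<r. e1 ! f = j" if "x = Suc j"
    using t_op_Suc_new_box_row[of j e1 e "added_boxes (x # xs) d" r] e1(2) Cons.prems(3) len assms(2) that
    by simp
  then have "t_op x (e1[r := j]) = Some (e[r := j])"
    using t_op_list_update_commute[OF x assms(2) _ e1r] e1(2) assms(3) len by simp
  with Cons.IH e1(1) Cons.prems show ?case by (simp add: apply_word_Cons)
qed simp

lemma apply_word_list_update_inv:
  assumes "\<forall>x\<in>set Q. j < x" "2 \<le> j" "r < length d" "d ! r = j - 1"
    and "apply_word Q (d[r := j]) = Some e'"
    and "\<forall>p. (p, Suc j) \<in> added_boxes Q (d[r := j]) \<longrightarrow> length d - r < p"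
  shows "\<exists>e. apply_word Q d = Some e \<and> e' = e[r := j]"
  using assms(1,5,6)
proof (induction Q arbitrary: e')
  case (Cons x xs)
  then obtain e1' where e1': "apply_word xs (d[r := j]) = Some e1'" "t_op x e1' = Some e'"
    by (auto elim: apply_word_Cons_SomeE)
  with Cons obtain e1 where e1: "apply_word xs d = Some e1" "e1' = e1[r := j]"
    by auto
  have x: "j < x" using Cons.prems(1) by simp
  have len: "length e1 = length d" and e1r: "e1 ! r = j - 1"
    using apply_word_larger_nth[OF _ assms(2) e1(1) assms(3,4)] Cons.prems(1) by simp_all
  have "new_box x e1' \<in> added_boxes (x # xs) (d[r := j])" using e1'(1) by simp
  then have "\<exists>f<r. e1' ! f = j" if "x = Suc j"
    using t_op_Suc_new_box_row[of j e1' e' "added_boxes (x # xs) (d[r := j])" r]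
      e1'(2) Cons.prems(3) len e1(2) assms(2) that by simp
  moreover have "e1' ! f = e1 ! f" if "f < r" for f
    using that e1(2) by simp
  ultimately have "\<exists>f<r. e1 ! f = j" if "x = Suc j"
    using that by (metis (no_types))
  then have "map_option (\<lambda>e. e[r := j]) (t_op x e1) = Some e'"
    using t_op_list_update_commute[OF x assms(2) _ e1r] e1'(2) e1(2) assms(3) len by simp
  with e1(1) show ?case by (auto simp: apply_word_Cons)
qed simp

text \<open>The condition defining \<open>NE\<close>, in the bottom-row coordinates of the added boxes.\<close>

definition next_column_above :: "nat \<Rightarrow> (nat \<times> nat) set \<Rightarrow> bool" where
  "next_column_above j S \<longleftrightarrow> (\<forall>p q. (p, Suc j) \<in> S \<longrightarrow> (q, j) \<in> S \<longrightarrow> q < p)"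

lemma apply_word_move_letter_back:
  assumes Q: "\<forall>x\<in>set Q. j < x" and j: "2 \<le> j"
    and run: "apply_word (j # Q) g = Some e"
    and above: "next_column_above j (added_boxes (j # Q) g)"
  shows "apply_word (Q @ [j]) g = Some e"
proof -
  obtain eQ where eQ: "apply_word Q g = Some eQ" "t_op j eQ = Some e"
    using run by (auto elim: apply_word_Cons_SomeE)
  let ?r = "first_index (j - 1) g"
  have positions: "map (\<lambda>y. y = j - 1) eQ = map (\<lambda>y. y = j - 1) g"
    using apply_word_larger_keeps_positions[OF Q j eQ(1)] .
  have r: "j - 1 \<in> set g" "first_index (j - 1) eQ = ?r"
    using t_op_eq_list_update(1)[OF eQ(2) j] mem_set_map_eq[OF positions] first_index_map_eq[OF positions]
    by auto
  have e: "e = eQ[?r := j]"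
    using t_op_eq_list_update(2)[OF eQ(2) j] r(2) by simp
  have "new_box j eQ = (length g - ?r, j)"
    using j r(2) map_eq_imp_length_eq[OF positions] by (simp add: new_box_def)
  then have "(length g - ?r, j) \<in> added_boxes (j # Q) g"
    using eQ(1) by simp
  then have "\<forall>p. (p, Suc j) \<in> added_boxes Q g \<longrightarrow> length g - ?r < p"
    using above by (auto simp: next_column_above_def)
  then have "apply_word Q (g[?r := j]) = Some e"
    using apply_word_list_update[OF Q j _ _ eQ(1)] r(1) e
    by (simp add: first_index_less_length nth_first_index)
  moreover have "t_op j g = Some (g[?r := j])"
    using j r(1) by (simp add: t_op_eq)
  ultimately show ?thesis by (simp add: apply_word_append)
qed

lemma apply_word_move_letter_front:
  assumes Q: "\<forall>x\<in>set Q. j < x" and j: "2 \<le> j"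
    and run: "apply_word (Q @ [j]) g = Some e"
    and above: "next_column_above j (added_boxes (Q @ [j]) g)"
  shows "apply_word (j # Q) g = Some e"
proof -
  obtain g' where g': "t_op j g = Some g'" "apply_word Q g' = Some e"
    using run by (cases "t_op j g") (auto simp: apply_word_append)
  let ?r = "first_index (j - 1) g"
  have r: "j - 1 \<in> set g" "g' = g[?r := j]"
    using t_op_eq_list_update[OF g'(1) j] by simp_all
  have "new_box j g = (length g - ?r, j)"
    using j by (simp add: new_box_def)
  then have "(length g - ?r, j) \<in> added_boxes (Q @ [j]) g"
    using added_boxes_append[of "[j]" g g' Q] g'(1) by simp
  moreover have "added_boxes Q g' \<subseteq> added_boxes (Q @ [j]) g"
    using added_boxes_append[of "[j]" g g' Q] g'(1) by auto
  ultimately have "\<forall>p. (p, Suc j) \<in> added_boxes Q (g[?r := j]) \<longrightarrow> length g - ?r < p"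
    using above r(2) by (auto simp: next_column_above_def)
  then obtain e0 where e0: "apply_word Q g = Some e0" "e = e0[?r := j]"
    using apply_word_list_update_inv[OF Q j _ _ g'(2)[unfolded r(2)]] r(1)
    by (auto simp: first_index_less_length nth_first_index)
  have positions: "map (\<lambda>y. y = j - 1) e0 = map (\<lambda>y. y = j - 1) g"
    using apply_word_larger_keeps_positions[OF Q j e0(1)] .
  have "t_op j e0 = Some e"
    using j r(1) e0(2) mem_set_map_eq[OF positions] first_index_map_eq[OF positions] by (simp add: t_op_eq)
  with e0(1) show ?thesis by (simp add: apply_word_Cons)
qed

lemma next_column_above_subset:
  "next_column_above j T \<Longrightarrow> S \<subseteq> T \<Longrightarrow> next_column_above j S"
  by (auto simp: next_column_above_def)

lemma apply_word_swap_letter: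
  assumes Q: "\<forall>x\<in>set Q. j < x" and j: "2 \<le> j"
    and XY: "X = j # Q \<and> Y = Q @ [j] \<or> X = Q @ [j] \<and> Y = j # Q"
    and run: "apply_word (P @ X @ R) a = Some b"
    and above: "next_column_above j (added_boxes (P @ X @ R) a)"
  shows "apply_word (P @ Y @ R) a = Some b"
proof -
  obtain g e where ge: "apply_word R a = Some g" "apply_word X g = Some e" "apply_word P e = Some b"
    using run by (rule apply_word_append3_SomeE)
  have "added_boxes X g \<subseteq> added_boxes (P @ X @ R) a"
    using added_boxes_append[of "X @ R" a e P] added_boxes_append[OF ge(1), of X] ge(1,2)
    by (auto simp: apply_word_append)
  then have "next_column_above j (added_boxes X g)"
    using above next_column_above_subset by blast
  then have "apply_word Y g = Some e"
    using XY ge(2) apply_word_move_letter_back[OF Q j] apply_word_move_letter_front[OF Q j] by blast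
  with ge(1,3) show ?thesis by (simp add: apply_word_append)
qed

section \<open>The skew shape\<close>

lemma mem_boxes_iff_bottom_boxes:
  "(i, c) \<in> boxes b \<longleftrightarrow> 1 \<le> i \<and> i \<le> length b \<and> (length b + 1 - i, c) \<in> bottom_boxes b"
proof -
  have "1 \<le> i \<Longrightarrow> i \<le> length b \<Longrightarrow> length b - (length b + 1 - i) = i - 1" by arith
  then show ?thesis by (auto simp: boxes_def bottom_boxes_def)
qed

lemma mem_skew_iff:
  "(i, c) \<in> skew b a \<longleftrightarrow> (i, c) \<in> boxes b \<and>
     \<not> (\<exists>i'. i = length b - length a + i' \<and> 1 \<le> i' \<and> i' \<le> length a \<and>
            1 \<le> c \<and> c \<le> a ! (i' - 1))"
  by (auto simp: skew_def)

lemma mem_skew_iff_bottom_boxes: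
  assumes "length a \<le> length b"
  shows "(i, c) \<in> skew b a \<longleftrightarrow>
           1 \<le> i \<and> i \<le> length b \<and> (length b + 1 - i, c) \<in> bottom_boxes b - bottom_boxes a"
proof -
  have "(\<exists>i'. i = length b - length a + i' \<and> 1 \<le> i' \<and> i' \<le> length a \<and>
            1 \<le> c \<and> c \<le> a ! (i' - 1))
          \<longleftrightarrow> (length b + 1 - i, c) \<in> bottom_boxes a" if "1 \<le> i" "i \<le> length b"
  proof
    assume "\<exists>i'. i = length b - length a + i' \<and> 1 \<le> i' \<and> i' \<le> length a \<and>
      1 \<le> c \<and> c \<le> a ! (i' - 1)"
    then obtain i' where
      "i = length b - length a + i'" "1 \<le> i'" "i' \<le> length a" "1 \<le> c" "c \<le> a ! (i' - 1)"
      by blast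
    moreover have "length a - (length b + 1 - i) = i' - 1" using calculation assms by arith
    ultimately show "(length b + 1 - i, c) \<in> bottom_boxes a"
      using assms by (auto simp: bottom_boxes_def)
  next
    assume box: "(length b + 1 - i, c) \<in> bottom_boxes a"
    then have "length b - length a < i" using that by (auto simp: bottom_boxes_def)
    moreover have "length a - (length b + 1 - i) = i - (length b - length a) - 1"
      using calculation assms that by arith
    ultimately show "\<exists>i'. i = length b - length a + i' \<and> 1 \<le> i' \<and> i' \<le> length a \<and>
        1 \<le> c \<and> c \<le> a ! (i' - 1)"
      using box that assms by (intro exI[of _ "i - (length b - length a)"]) (auto simp: bottom_boxes_def)
  qed
  then show ?thesis
    using mem_skew_iff mem_boxes_iff_bottom_boxes by blast
qed

lemma mem_skew_iff_added_boxes: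
  assumes "apply_word w a = Some b"
  shows "(i, c) \<in> skew b a \<longleftrightarrow> 1 \<le> i \<and> i \<le> length b \<and> (length b + 1 - i, c) \<in> added_boxes w a"
  using mem_skew_iff_bottom_boxes[OF length_apply_word_mono[OF assms]] added_boxes_eq[OF assms]
  by simp

lemma NE_next_column_above:
  assumes run: "apply_word w a = Some b" and NE: "j \<in> NE (skew b a)"
  shows "next_column_above j (added_boxes w a)"
  unfolding next_column_above_def
proof (intro allI impI)
  fix p q
  assume p: "(p, Suc j) \<in> added_boxes w a" and q: "(q, j) \<in> added_boxes w a"
  then have "1 \<le> p" "p \<le> length b" "1 \<le> q" "q \<le> length b"
    using added_boxes_eq[OF run] by (auto simp: bottom_boxes_def)
  then have "(length b + 1 - p, Suc j) \<in> skew b a" "(length b + 1 - q, j) \<in> skew b a"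
    using p q mem_skew_iff_added_boxes[OF run] by auto
  then have "length b + 1 - p < length b + 1 - q"
    using NE by (auto simp: NE_def)
  then show "q < p" by arith
qed

lemma NE_columns_mem_word:
  assumes run: "apply_word w a = Some b" and NE: "j \<in> NE (skew b a)"
  shows "j \<in> set w" "Suc j \<in> set w"
proof -
  obtain i i' where "(i, j) \<in> skew b a" "(i', Suc j) \<in> skew b a"
    using NE by (auto simp: NE_def supp_def)
  then show "j \<in> set w" "Suc j \<in> set w"
    using mem_skew_iff_added_boxes[OF run] added_boxes_column by blast+
qed

lemma first_column_bottom_boxes:
  assumes "is_composition a"
  shows "(p, 1) \<in> bottom_boxes a \<longleftrightarrow> 1 \<le> p \<and> p \<le> length a"
proof
  assume p: "1 \<le> p \<and> p \<le> length a"
  then have "length a - p < length a" by arith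
  then have "a ! (length a - p) \<in> set a" by (rule nth_mem)
  then have "0 < a ! (length a - p)" using assms by (auto simp: is_composition_def)
  then show "(p, 1) \<in> bottom_boxes a" using p by (simp add: bottom_boxes_def)
qed (simp add: bottom_boxes_def)

lemma NE_ge_2:
  assumes comp: "is_composition a" and len: "length a \<le> length b" and NE: "j \<in> NE (skew b a)"
  shows "2 \<le> j"
proof -
  have first_column: "(i, 1) \<in> skew b a \<longleftrightarrow> (i, 1) \<in> boxes b \<and> i \<le> length b - length a" for i
  proof -
    have "(i, 1) \<in> skew b a \<longleftrightarrow> (i, 1) \<in> boxes b \<and> \<not> length b + 1 - i \<le> length a"
      using mem_skew_iff_bottom_boxes[OF len, of i 1] mem_boxes_iff_bottom_boxes[of i 1 b]
        first_column_bottom_boxes[OF comp, of "length b + 1 - i"] by auto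
    also have "\<dots> \<longleftrightarrow> (i, 1) \<in> boxes b \<and> i \<le> length b - length a"
    proof -
      have "1 \<le> i \<and> i \<le> length b" if "(i, 1) \<in> boxes b" using that by (simp add: boxes_def)
      then show ?thesis using len by linarith
    qed
    finally show ?thesis .
  qed
  have "j \<noteq> 0" using NE by (auto simp: NE_def supp_def mem_skew_iff boxes_def)
  moreover have "j \<noteq> 1"
  proof
    assume j: "j = 1"
    obtain i1 i2 where i1: "(i1, 2) \<in> skew b a" and i2: "(i2, 1) \<in> skew b a"
      using NE by (auto simp: NE_def supp_def j numeral_2_eq_2)
    have below: "i < i'" if "(i, 2) \<in> skew b a" "(i', 1) \<in> skew b a" for i i'
      using NE that by (auto simp: NE_def j numeral_2_eq_2)
    have "(i1, 1) \<in> boxes b" using i1 by (auto simp: mem_skew_iff boxes_def)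
    then have "length b - length a < i1"
      using below[OF i1, of i1] first_column[of i1] by linarith
    then show False
      using below[OF i1 i2] i2 first_column by simp
  qed
  ultimately show ?thesis by arith
qed

section \<open>Reverse hookwords\<close>

lemma sorted_filter_split:
  fixes xs :: "'a::linorder list"
  shows "sorted xs \<Longrightarrow>
    xs = filter (\<lambda>x. x < j) xs @ filter (\<lambda>x. x = j) xs @ filter (\<lambda>x. j < x) xs"
proof (induction xs)
  case (Cons x xs)
  then have IH: "filter (\<lambda>x. x < j) xs @ filter (\<lambda>x. x = j) xs @ filter (\<lambda>x. j < x) xs = xs"
    and ge: "\<forall>y\<in>set xs. x \<le> y" by auto
  show ?case
  proof (cases x j rule: linorder_cases)
    case greater
    with ge have
      "filter (\<lambda>x. x < j) xs = []" "filter (\<lambda>x. x = j) xs = []" "filter (\<lambda>x. j < x) xs = xs"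
      by (auto simp: filter_empty_conv filter_id_conv)
    with greater show ?thesis by auto
  next
    case equal
    with ge have "filter (\<lambda>x. x < j) xs = []" by (auto simp: filter_empty_conv)
    with equal IH show ?thesis by simp
  qed (use IH in auto)
qed simp

lemma sorted_wrt_greater_filter_split:
  fixes xs :: "'a::linorder list"
  assumes "sorted_wrt (>) xs"
  shows "xs = filter (\<lambda>x. j < x) xs @ filter (\<lambda>x. x = j) xs @ filter (\<lambda>x. x < j) xs"
proof -
  have "sorted_wrt (<) (rev xs)"
    using assms by (simp add: sorted_wrt_rev)
  then have "sorted (rev xs)" by (rule strict_sorted_imp_sorted)
  from sorted_filter_split[OF this, of j] show ?thesis
    by (simp add: rev_filter[symmetric] flip: rev_append rev_swap)
qed

lemma rhw_k_append_iff:
  "rhw_k (A @ D) (length A) \<longleftrightarrow>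
     sorted A \<and> sorted_wrt (>) D \<and> D \<noteq> [] \<and> (\<forall>x\<in>set A. x \<le> hd D)"
proof (cases D)
  case (Cons d D')
  then have "take (Suc (length A)) (A @ D) = A @ [d]" by simp
  then show ?thesis using Cons by (auto simp: rhw_k_def sorted_append)
qed (simp add: rhw_k_def)

lemma rhw_k_take_drop:
  assumes "rhw_k w k"
  shows "sorted (take k w)" "sorted_wrt (>) (drop k w)" "drop k w \<noteq> []"
    "\<forall>x\<in>set w. x \<le> hd (drop k w)"
proof -
  have k: "length (take k w) = k" using assms by (simp add: rhw_k_def)
  then have "rhw_k (take k w @ drop k w) (length (take k w))" using assms by simp
  then have *: "sorted (take k w)" "sorted_wrt (>) (drop k w)" "drop k w \<noteq> []"
      "\<forall>x\<in>set (take k w). x \<le> hd (drop k w)"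
    unfolding rhw_k_append_iff by auto
  then have "\<forall>x\<in>set (drop k w). x \<le> hd (drop k w)"
    by (cases "drop k w") auto
  moreover have "set w = set (take k w) \<union> set (drop k w)"
    using set_append[of "take k w" "drop k w"] by simp
  ultimately show "sorted (take k w)" "sorted_wrt (>) (drop k w)" "drop k w \<noteq> []"
      "\<forall>x\<in>set w. x \<le> hd (drop k w)"
    using * by auto
qed

lemma rhw_k_unique:
  assumes "rhw_k v k" "rhw_k v k'"
  shows "k = k'"
proof -
  have "\<not> k < k'" if "rhw_k v k" "rhw_k v k'" for k k'
  proof
    assume "k < k'"
    moreover have "k' < length v" "sorted (take (Suc k') v)" "sorted_wrt (>) (drop k v)"
      using that by (auto simp: rhw_k_def)
    moreover have "1 < length (drop k v)" using calculation by simp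
    ultimately have "v ! k \<le> v ! Suc k" "v ! Suc k < v ! k"
      using sorted_nth_mono[of "take (Suc k') v" k "Suc k"]
        sorted_wrt_nth_less[of "(>)" "drop k v" 0 1] by auto
    then show False by simp
  qed
  with assms show ?thesis by (meson linorder_neqE_nat)
qed

lemma leg_eq_set_drop: "rhw_k v k \<Longrightarrow> leg v = set (drop k v)"
  unfolding leg_def using rhw_k_unique by (metis the_equality)

lemma strict_sorted_greater_equal:
  fixes D D' :: "'a::linorder list"
  shows "sorted_wrt (>) D \<Longrightarrow> sorted_wrt (>) D' \<Longrightarrow> set D = set D' \<Longrightarrow> D = D'"
  using strict_sorted_equal[of "rev D" "rev D'"] by (simp add: sorted_wrt_rev)

lemma rhw_k_eqI:
  assumes v: "rhw_k v k" and v': "rhw_k v' k'"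
    and mset: "mset v = mset v'" and leg: "leg v = leg v'"
  shows "v = v'"
proof -
  have drop: "drop k v = drop k' v'"
    using rhw_k_take_drop(2)[OF v] rhw_k_take_drop(2)[OF v'] leg
    by (intro strict_sorted_greater_equal) (simp_all add: leg_eq_set_drop[OF v] leg_eq_set_drop[OF v'])
  have "mset (take k v) + mset (drop k v) = mset (take k' v') + mset (drop k' v')"
    using mset by (metis append_take_drop_id mset_append)
  then have "mset (take k v) = mset (take k' v')"
    using drop by simp
  then have "take k v = take k' v'"
    using rhw_k_take_drop(1)[OF v] rhw_k_take_drop(1)[OF v'] properties_for_sort sorted_sort_id
    by metis
  with drop show ?thesis by (metis append_take_drop_id)
qed

lemma filter_eq_strict_sorted_greater:
  fixes D :: "'a::linorder list"
  shows "sorted_wrt (>) D \<Longrightarrow> filter (\<lambda>x. x = j) D = (if j \<in> set D then [j] else [])"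
  by (induction D) auto

text \<open>A reverse hookword \<open>Alt E Agt Dgt F Dlt\<close>, with \<open>E\<close> and \<open>F\<close> consisting of \<open>j\<close>'s,
  has arm \<open>Alt E Agt\<close> and leg \<open>Dgt F Dlt\<close>.\<close>

definition hook_parts :: "nat \<Rightarrow> nat list \<Rightarrow> nat list \<Rightarrow> nat list \<Rightarrow> nat list \<Rightarrow> bool" where
  "hook_parts j Alt Agt Dgt Dlt \<longleftrightarrow>
     sorted Alt \<and> sorted Agt \<and> sorted_wrt (>) Dgt \<and> sorted_wrt (>) Dlt \<and> Dgt \<noteq> [] \<and>
     (\<forall>x\<in>set Alt. x < j) \<and> (\<forall>x\<in>set Agt. j < x \<and> x \<le> hd Dgt) \<and>
     (\<forall>x\<in>set Dgt. j < x) \<and> (\<forall>x\<in>set Dlt. x < j)"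

lemma rhw_k_hook_parts:
  assumes "hook_parts j Alt Agt Dgt Dlt" "set E \<subseteq> {j}" "F = [] \<or> F = [j]"
  shows "rhw_k (Alt @ E @ Agt @ Dgt @ F @ Dlt) (length (Alt @ E @ Agt))"
proof -
  have parts: "sorted Alt" "sorted Agt" "sorted_wrt (>) Dgt" "sorted_wrt (>) Dlt" "Dgt \<noteq> []"
    "\<forall>x\<in>set Alt. x < j" "\<forall>x\<in>set Agt. j < x \<and> x \<le> hd Dgt"
    "\<forall>x\<in>set Dgt. j < x" "\<forall>x\<in>set Dlt. x < j"
    using assms(1) unfolding hook_parts_def by simp_all
  have E: "\<forall>y\<in>set E. y = j" using assms(2) by auto
  then have "replicate (length E) j = E" by (rule replicate_length_same)
  then have "sorted E" using sorted_replicate[of "length E" j] by argo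
  moreover have "x \<le> y" if "x \<in> set Alt" "y \<in> set Agt" for x y
  proof -
    have "x < j" "j < y" using parts(6,7) that by auto
    then show ?thesis by simp
  qed
  ultimately have "sorted (Alt @ E @ Agt)"
    using parts(1,2,6,7) E by (auto simp: sorted_append)
  moreover have "y < x" if "x \<in> set Dgt" "y \<in> set Dlt" for x y
  proof -
    have "y < j" "j < x" using parts(8,9) that by auto
    then show ?thesis by simp
  qed
  then have "sorted_wrt (>) (Dgt @ F @ Dlt)"
    using parts(3,4,8,9) assms(3) by (auto simp: sorted_wrt_append)
  moreover have "hd (Dgt @ F @ Dlt) = hd Dgt" "j < hd Dgt"
    using parts(5,8) by auto
  then have "\<forall>x\<in>set (Alt @ E @ Agt). x \<le> hd (Dgt @ F @ Dlt)"
    using parts(6,7) E by auto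
  ultimately show ?thesis
    using parts(5) rhw_k_append_iff[of "Alt @ E @ Agt" "Dgt @ F @ Dlt"] by simp
qed

lemma rhw_k_split_at:
  assumes w: "rhw_k w k" and Suc_j: "Suc j \<in> set w"
  obtains Alt E Agt Dgt F Dlt where "hook_parts j Alt Agt Dgt Dlt"
    "set E \<subseteq> {j}" "F = [] \<or> F = [j]" "w = Alt @ E @ Agt @ Dgt @ F @ Dlt"
proof -
  let ?A = "take k w" and ?D = "drop k w"
  define Alt E Agt where "Alt = filter (\<lambda>x. x < j) ?A" and "E = filter (\<lambda>x. x = j) ?A"
    and "Agt = filter (\<lambda>x. j < x) ?A"
  define Dgt Dlt where "Dgt = filter (\<lambda>x. j < x) ?D" and "Dlt = filter (\<lambda>x. x < j) ?D"
  define F where "F = filter (\<lambda>x. x = j) ?D"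
  note hook = rhw_k_take_drop[OF w]
  have A: "?A = Alt @ E @ Agt"
    unfolding Alt_def E_def Agt_def by (rule sorted_filter_split[OF hook(1)])
  have "?D = Dgt @ F @ Dlt"
    unfolding Dgt_def F_def Dlt_def by (rule sorted_wrt_greater_filter_split[OF hook(2)])
  then have w_eq: "w = Alt @ E @ Agt @ Dgt @ F @ Dlt"
    using A append_take_drop_id[of k w] by simp
  have "F = [] \<or> F = [j]"
    unfolding F_def filter_eq_strict_sorted_greater[OF hook(2)] by simp
  have "j < hd ?D" using hook(4) Suc_j by fastforce
  then have "Dgt \<noteq> []" "hd Dgt = hd ?D"
    using hook(3) unfolding Dgt_def by (cases ?D; auto)+
  moreover have "\<forall>x\<in>set Agt. x \<le> hd Dgt"
    using hook(4) \<open>hd Dgt = hd ?D\<close> by (auto simp: Agt_def dest: in_set_takeD)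
  moreover have "sorted Alt" "sorted Agt" "sorted_wrt (>) Dgt" "sorted_wrt (>) Dlt"
    using hook(1,2) by (simp_all add: Alt_def Agt_def Dgt_def Dlt_def sorted_wrt_filter)
  ultimately have "hook_parts j Alt Agt Dgt Dlt"
    by (simp add: hook_parts_def Alt_def Agt_def Dgt_def Dlt_def)
  moreover have "set E \<subseteq> {j}" by (auto simp: E_def)
  ultimately show thesis using that[OF _ _ _ w_eq] \<open>F = [] \<or> F = [j]\<close> by simp
qed

lemma rhw_k_toggle_leg:
  assumes w: "rhw_k w k" and j: "j \<in> set w" and Suc_j: "Suc j \<in> set w"
  obtains P Q R X Y w' k' where "\<forall>x\<in>set Q. j < x"
    "X = j # Q \<and> Y = Q @ [j] \<or> X = Q @ [j] \<and> Y = j # Q" "w = P @ X @ R" "w' = P @ Y @ R"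
    "rhw_k w' k'" "leg w' = (if j \<in> leg w then leg w - {j} else insert j (leg w))"
proof -
  obtain Alt E Agt Dgt F Dlt where parts: "hook_parts j Alt Agt Dgt Dlt" and E: "set E \<subseteq> {j}"
    and F: "F = [] \<or> F = [j]" and w_eq: "w = Alt @ E @ Agt @ Dgt @ F @ Dlt"
    using rhw_k_split_at[OF w Suc_j] .
  have leg: "leg (Alt @ E' @ Agt @ Dgt @ F' @ Dlt) = set Dgt \<union> set F' \<union> set Dlt"
    if "set E' \<subseteq> {j}" "F' = [] \<or> F' = [j]" for E' F'
    using leg_eq_set_drop[OF rhw_k_hook_parts[OF parts that]] by auto
  have j_notin: "j \<notin> set Dgt \<union> set Dlt" and Q: "\<forall>x\<in>set (Agt @ Dgt). j < x"
    using parts by (auto simp: hook_parts_def)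
  from F show thesis
  proof
    assume F_j: "F = [j]"
    then have "leg w = insert j (set Dgt \<union> set Dlt)"
      using leg[OF E F] w_eq by simp
    moreover have E': "set (E @ [j]) \<subseteq> {j}" using E by simp
    ultimately have "leg (Alt @ (E @ [j]) @ Agt @ Dgt @ [] @ Dlt) = leg w - {j}"
      using leg[OF E', of "[]"] j_notin by auto
    then show thesis
      using rhw_k_hook_parts[OF parts E', of "[]"] w_eq F_j \<open>leg w = _\<close>
      by (intro that[OF Q, where P = "Alt @ E" and R = Dlt
            and X = "(Agt @ Dgt) @ [j]" and Y = "j # Agt @ Dgt"]) simp_all
  next
    assume F_Nil: "F = []"
    then have leg_w: "leg w = set Dgt \<union> set Dlt"
      using leg[OF E F] w_eq by simp
    have "j \<in> set E" using j w_eq F_Nil parts by (auto simp: hook_parts_def)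
    then have nonempty: "E \<noteq> []" by auto
    then have "last E = j" using E last_in_set by blast
    then have "E = butlast E @ [j]" using append_butlast_last_id[OF nonempty] by simp
    then obtain E' where E'_eq: "E = E' @ [j]" by blast
    have E': "set E' \<subseteq> {j}" using E E'_eq by simp
    then have "leg (Alt @ E' @ Agt @ Dgt @ [j] @ Dlt) = insert j (leg w)"
      using leg[OF E', of "[j]"] leg_w by auto
    then show thesis
      using rhw_k_hook_parts[OF parts E', of "[j]"] w_eq E'_eq F_Nil leg_w j_notin
      by (intro that[OF Q, where P = "Alt @ E'" and R = Dlt
            and X = "j # Agt @ Dgt" and Y = "(Agt @ Dgt) @ [j]"]) simp_all
  qed
qed

lemma content_eq_iff_mset_eq: "content v = content v' \<longleftrightarrow> mset v = mset v'"
proof -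
  have "content v = content v' \<longleftrightarrow> (\<forall>x. count_list v x = count_list v' x)"
    by (simp add: content_def fun_eq_iff)
  also have "\<dots> \<longleftrightarrow> mset v = mset v'"
    by (simp add: multiset_eq_iff count_mset)
  finally show ?thesis .
qed

lemma reverse_hookword_eqI:
  assumes "reverse_hookword v" "reverse_hookword v'" "content v = content v'" "leg v = leg v'"
  shows "v = v'"
proof -
  obtain k k' where "rhw_k v k" "rhw_k v' k'"
    using assms(1,2) by (auto simp: reverse_hookword_def)
  then show ?thesis
    using rhw_k_eqI assms(3,4) content_eq_iff_mset_eq by blast
qed

lemma CRHW_mset_eq:
  assumes "w \<in> CRHW n" "rhw_k w' k'" "mset w' = mset w"
  shows "w' \<in> CRHW n"
proof -
  have set: "set w' = set w" by (rule mset_eq_setD[OF assms(3)])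
  have len: "length w' = length w" by (rule mset_eq_length[OF assms(3)])
  have "connected_word w" "reverse_hookword w" "length w = n"
    using assms(1) by (simp_all add: CRHW_def)
  moreover have "connected_word w' \<longleftrightarrow> connected_word w"
    unfolding connected_word_def set ..
  moreover have "reverse_hookword w'"
    using \<open>reverse_hookword w\<close> assms(2) unfolding reverse_hookword_def set by blast
  ultimately have "connected_word w'" "reverse_hookword w'" "length w' = n"
    using len by simp_all
  then show ?thesis by (simp add: CRHW_def)
qed

theorem mainTheorem16:
  fixes \<alpha> \<beta> w :: "nat list" and n j :: nat
  assumes "is_composition \<alpha>"
    and "c_less \<alpha> \<beta>"
    and "nc_border_strip (skew \<beta> \<alpha>)"
    and "card (skew \<beta> \<alpha>) = n"
    and "j \<in> NE (skew \<beta> \<alpha>)"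
    and "w \<in> CRHW n"
    and "apply_word w \<alpha> = Some \<beta>"
  defines "L' \<equiv> (if j \<in> leg w then leg w - {j} else insert j (leg w))"
  shows "(\<exists>w'. reverse_hookword w' \<and> content w' = content w \<and> leg w' = L') \<and>
         (\<forall>w'. reverse_hookword w' \<and> content w' = content w \<and> leg w' = L' \<longrightarrow>
                w' \<in> CRHW n \<and> apply_word w' \<alpha> = Some \<beta>)"
proof -
  note comp = assms(1) and NE = assms(5) and w = assms(6) and run = assms(7)
  have j: "2 \<le> j"
    using NE_ge_2[OF comp length_apply_word_mono[OF run] NE] .
  obtain k where hook: "rhw_k w k"
    using w by (auto simp: CRHW_def reverse_hookword_def)
  obtain P Q R X Y w'' k'' where Q: "\<forall>x\<in>set Q. j < x"
    and XY: "X = j # Q \<and> Y = Q @ [j] \<or> X = Q @ [j] \<and> Y = j # Q"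
    and w_eq: "w = P @ X @ R" and w''_eq: "w'' = P @ Y @ R"
    and hook'': "rhw_k w'' k''" and leg'': "leg w'' = L'"
    unfolding L'_def by (rule rhw_k_toggle_leg[OF hook NE_columns_mem_word[OF run NE]])
  have run'': "apply_word w'' \<alpha> = Some \<beta>"
    unfolding w''_eq
    using apply_word_swap_letter[OF Q j XY run[unfolded w_eq]]
      NE_next_column_above[OF run NE, unfolded w_eq] by blast
  have mset: "mset w'' = mset w"
    using XY unfolding w_eq w''_eq by auto
  have CRHW'': "w'' \<in> CRHW n"
    by (rule CRHW_mset_eq[OF w hook'' mset])
  then have hw'': "reverse_hookword w''" "content w'' = content w"
    using mset by (simp_all add: CRHW_def content_eq_iff_mset_eq)
  have "w' = w''" if "reverse_hookword w' \<and> content w' = content w \<and> leg w' = L'" for w'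
    using reverse_hookword_eqI[of w' w''] that hw'' leg'' by simp
  then show ?thesis
    using hw'' leg'' CRHW'' run'' by blast
qed

end
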